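(* Let $p$ be an odd prime, let $v$ be an integer with $1<v<p-1$, let $g\in\{2,\dots,p-1\}$ be a primitive root modulo $p$, and let $t\ge 1$. For $z=(z(0),\dots,z(t-1))\in\{0,\dots,v-1\}^t$ let $$\lambda(z)=\#\{x\in\{0,1,\dots,p-2\}:\ (g^{x+\iota}\,\%\,p)\,\%\,v=z(\iota)\text{ for all }0\le\iota<t\}.$$ Write $p=q\,g^{t-1}+r$ with integers $q\ge 0$ and $0\le r<g^{t-1}$. Then for every $z\in\{0,\dots,v-1\}^t$, $$\left\lfloor \frac{g}{v}\right\rfloor^{t-1}\left\lfloor\frac{q}{v}\right\rfloor\ \le\ \lambda(z)\ \le\ \left\lceil\frac{g}{v}\right\rceil^{t-1}\left(\left\lfloor\frac{q}{v}\right\rfloor+1\right).$$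
   Context: For integers $x$ and $m\ge1$, $x\,\%\,m$ denotes the least nonnegative remainder of $x$ modulo $m$. Thus $\lambda(z)$ is the number of (cyclic) occurrences of the tuple $z$ in the periodic sequence $\big((g^{i}\,\%\,p)\,\%\,v\big)_{i}$ of period $p-1$. *)

theory Defs
  imports "HOL-Number_Theory.Number_Theory"
begin

definition pattern_count :: "nat \<Rightarrow> nat \<Rightarrow> nat \<Rightarrow> nat \<Rightarrow> (nat \<Rightarrow> nat) \<Rightarrow> nat" where
  "pattern_count p g v t z =
     card {x \<in> {0..p-2}. \<forall>i<t. (g ^ (x + i) mod p) mod v = z i}"

end

theory Submission
  imports Defs
begin

(*
  Write y = g^x mod p, which runs through 1, ..., p - 1 as x runs through 0, ..., p - 2, and
  y_i = g^i y mod p. Then g y_i = p d_i + y_(i+1) with a carry d_i < g, and d_0, ..., d_(n-1)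
  (n = t - 1) are the base-g digits of floor(g^n y / p), most significant first. As p is
  invertible modulo v, once y_i = z(i) (mod v) the condition y_(i+1) = z(i+1) (mod v) just
  fixes d_i modulo v. So y has pattern z iff y = z(0) (mod v) and floor(g^n y / p) lies in a
  set of numbers below g^n whose digits lie in prescribed residue classes; there are between
  floor(g/v)^n and ceil(g/v)^n of these. Each fibre of y |-> floor(g^n y / p) consists of q or
  q + 1 consecutive integers, hence contains between floor(q/v) and floor(q/v) + 1 elements of
  any residue class modulo v.
*)

section \<open>Residue classes in intervals\<close>

lemma card_residues_window:
  fixes v c a :: nat assumes "c < v"
  shows "card {x \<in> {a..<a+v}. x mod v = c} = 1"
proof -
  define x0 where "x0 = a + (c + v - a mod v) mod v"
  have "x0 mod v = (a mod v + (c + v - a mod v)) mod v"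
    unfolding x0_def by (simp add: mod_add_right_eq mod_add_left_eq)
  also have "a mod v + (c + v - a mod v) = c + v"
    using mod_less_divisor[of v a] assms by linarith
  finally have x0: "x0 \<in> {a..<a+v}" "x0 mod v = c"
    using assms unfolding x0_def by auto
  have close_eq: "x = y" if "x \<le> y" "y < x + v" "x mod v = y mod v" for x y :: nat
  proof -
    have "v dvd y - x" using that mod_eq_dvd_iff_nat[of x y v] by simp
    moreover have "y - x < v" using that by linarith
    ultimately show ?thesis using that(1) by (metis nat_dvd_not_less diff_is_0_eq le_antisym not_gr0)
  qed
  have "{x \<in> {a..<a+v}. x mod v = c} = {x0}"
  proof (intro equalityI subsetI)
    fix x assume "x \<in> {x \<in> {a..<a+v}. x mod v = c}"
    with x0 close_eq[of x x0] close_eq[of x0 x] show "x \<in> {x0}" by force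
  qed (use x0 in auto)
  then show ?thesis by simp
qed

lemma card_residues_interval:
  fixes v c a L :: nat assumes "c < v"
  shows "L div v \<le> card {x \<in> {a..<a+L}. x mod v = c}"
    and "card {x \<in> {a..<a+L}. x mod v = c} \<le> (L + v - 1) div v"
proof -
  have "L div v \<le> card {x \<in> {a..<a+L}. x mod v = c} \<and> card {x \<in> {a..<a+L}. x mod v = c} \<le> (L + v - 1) div v"
  proof (induction L arbitrary: a rule: less_induct)
    case (less L)
    show ?case
    proof (cases "L < v")
      case True
      have "card {x \<in> {a..<a+L}. x mod v = c} \<le> card {x \<in> {a..<a+v}. x mod v = c}"
        using True by (intro card_mono) auto
      then have "card {x \<in> {a..<a+L}. x mod v = c} \<le> 1" using card_residues_window[OF assms] by simp
      moreover have "1 \<le> (L + v - 1) div v" if "L > 0" using that assms by (simp add: le_div_geq)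
      ultimately show ?thesis using True by (cases "L = 0") auto
    next
      case False
      have split: "{x \<in> {a..<a+L}. x mod v = c}
          = {x \<in> {a..<a+v}. x mod v = c} \<union> {x \<in> {a+v..<(a+v)+(L-v)}. x mod v = c}"
        using False by auto
      have "card {x \<in> {a..<a+L}. x mod v = c} = 1 + card {x \<in> {a+v..<(a+v)+(L-v)}. x mod v = c}"
        unfolding split card_residues_window[OF assms, of a, symmetric] by (rule card_Un_disjoint) auto
      moreover have "L div v = (L - v) div v + 1" "(L + v - 1) div v = (L - v + v - 1) div v + 1"
        using False assms by (simp_all add: le_div_geq)
      ultimately show ?thesis using less.IH[of "L - v" "a + v"] False assms by simp
    qed
  qed
  then show "L div v \<le> card {x \<in> {a..<a+L}. x mod v = c}"
    and "card {x \<in> {a..<a+L}. x mod v = c} \<le> (L + v - 1) div v" by auto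
qed

section \<open>Numbers with prescribed base-g digits\<close>

lemma digits_in_Suc_eq_image:
  fixes g n :: nat and D :: "nat \<Rightarrow> nat set"
  assumes "0 < g" and "D 0 \<subseteq> {..<g}"
  shows "{K \<in> {..<g^Suc n}. \<forall>j<Suc n. (K div g^j) mod g \<in> D j}
       = (\<lambda>(d, K). d + g * K) ` (D 0 \<times> {K \<in> {..<g^n}. \<forall>j<n. (K div g^j) mod g \<in> D (Suc j)})"
    (is "?S = ?f ` (D 0 \<times> ?E)")
proof (intro equalityI subsetI)
  fix N assume N: "N \<in> ?S"
  have "N = N mod g + g * (N div g)" by simp
  moreover have "N div g < g^n" using N assms(1) by (simp add: div_less_iff_less_mult mult.commute)
  moreover have "(N div g div g^j) mod g \<in> D (Suc j)" if "j < n" for j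
    using N that by (auto simp: div_mult2_eq)
  ultimately show "N \<in> ?f ` (D 0 \<times> ?E)"
    using N by (intro image_eqI[of _ _ "(N mod g, N div g)"]) auto
next
  fix N assume "N \<in> ?f ` (D 0 \<times> ?E)"
  then obtain d K where N: "N = d + g * K" "d \<in> D 0" "K \<in> ?E" by auto
  have "d < g" using N assms(2) by auto
  have "N < g * Suc K" using N \<open>d < g\<close> by simp
  also have "\<dots> \<le> g * g^n" using N by (intro mult_le_mono2) (simp add: Suc_le_eq)
  finally have "N < g^Suc n" by simp
  moreover have "(N div g^j) mod g \<in> D j" if "j < Suc n" for j
  proof (cases j)
    case 0
    then show ?thesis using N \<open>d < g\<close> by simp
  next
    case (Suc i)
    then show ?thesis using N that \<open>d < g\<close> by (simp add: div_mult2_eq)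
  qed
  ultimately show "N \<in> ?S" by simp
qed

lemma card_digits_in:
  fixes g n :: nat and D :: "nat \<Rightarrow> nat set"
  assumes "0 < g" and "\<forall>j<n. D j \<subseteq> {..<g}"
  shows "card {K \<in> {..<g^n}. \<forall>j<n. (K div g^j) mod g \<in> D j} = (\<Prod>j<n. card (D j))"
  using assms(2)
proof (induction n arbitrary: D)
  case 0
  have "{K \<in> {..<g^0}. \<forall>j<0. (K div g^j) mod g \<in> D j} = {0}" by auto
  then show ?case by simp
next
  case (Suc n)
  let ?E = "{K \<in> {..<g^n}. \<forall>j<n. (K div g^j) mod g \<in> D (Suc j)}"
  have shift: "(d + g * K) mod g = d" "(d + g * K) div g = K" if "d < g" for d K
    using that assms(1) by simp_all
  have "inj_on (\<lambda>(d, K). d + g * K) (D 0 \<times> ?E)"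
  proof (rule inj_onI, clarify)
    fix d K d' K' assume "d \<in> D 0" "d' \<in> D 0" and eq: "d + g * K = d' + g * K'"
    then have "d < g" "d' < g" using Suc.prems by auto
    then show "d = d' \<and> K = K'"
      using eq shift by metis
  qed
  moreover have "{K \<in> {..<g^Suc n}. \<forall>j<Suc n. (K div g^j) mod g \<in> D j} = (\<lambda>(d, K). d + g * K) ` (D 0 \<times> ?E)"
    using Suc.prems by (intro digits_in_Suc_eq_image[OF assms(1)]) simp
  ultimately have "card {K \<in> {..<g^Suc n}. \<forall>j<Suc n. (K div g^j) mod g \<in> D j} = card (D 0) * card ?E"
    by (simp add: card_image card_cartesian_product)
  also have "card ?E = (\<Prod>j<n. card (D (Suc j)))" using Suc by simp
  finally show ?case by (simp only: prod.lessThan_Suc_shift)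
qed

lemma card_digits_residues:
  fixes g v n :: nat and e :: "nat \<Rightarrow> nat"
  assumes "0 < g" and "\<forall>j<n. e j < v"
  shows "(g div v)^n \<le> card {K \<in> {..<g^n}. \<forall>j<n. (K div g^j) mod g mod v = e j}"
    and "card {K \<in> {..<g^n}. \<forall>j<n. (K div g^j) mod g mod v = e j} \<le> ((g + v - 1) div v)^n"
proof -
  define D where "D j = {d \<in> {0..<0 + g}. d mod v = e j}" for j
  have "{K \<in> {..<g^n}. \<forall>j<n. (K div g^j) mod g mod v = e j}
      = {K \<in> {..<g^n}. \<forall>j<n. (K div g^j) mod g \<in> D j}"
    unfolding D_def using assms(1) by auto
  then have card: "card {K \<in> {..<g^n}. \<forall>j<n. (K div g^j) mod g mod v = e j} = (\<Prod>j<n. card (D j))"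
    using card_digits_in[OF assms(1), of n D] unfolding D_def by auto
  have "g div v \<le> card (D j)" "card (D j) \<le> (g + v - 1) div v" if "j < n" for j
    unfolding D_def using assms(2) that
    by (intro card_residues_interval; simp)+
  then show "(g div v)^n \<le> card {K \<in> {..<g^n}. \<forall>j<n. (K div g^j) mod g mod v = e j}"
    and "card {K \<in> {..<g^n}. \<forall>j<n. (K div g^j) mod g mod v = e j} \<le> ((g + v - 1) div v)^n"
    unfolding card using prod_mono[of "{..<n}" "\<lambda>_. g div v" "\<lambda>j. card (D j)"]
      prod_mono[of "{..<n}" "\<lambda>j. card (D j)" "\<lambda>_. (g + v - 1) div v"] by auto
qed

section \<open>Fibres of the map from y to G y div p\<close>

lemma ceiling_div_le_iff:
  fixes m G y :: nat
  assumes "0 < G"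
  shows "(m + G - 1) div G \<le> y \<longleftrightarrow> m \<le> G * y"
proof -
  have "(m + G - 1) div G \<le> y \<longleftrightarrow> m + G - 1 < Suc y * G"
    using div_less_iff_less_mult[OF assms] by (metis less_Suc_eq_le)
  also have "\<dots> \<longleftrightarrow> m \<le> G * y"
    using assms by (simp add: algebra_simps) linarith
  finally show ?thesis .
qed

lemma div_eq_iff_ceiling_bounds:
  fixes G p y K :: nat
  assumes "0 < G" and "0 < p"
  shows "G * y div p = K \<longleftrightarrow> (K * p + G - 1) div G \<le> y \<and> y < (Suc K * p + G - 1) div G"
proof -
  have "G * y div p = K \<longleftrightarrow> K \<le> G * y div p \<and> G * y div p < Suc K"
    by linarith
  also have "\<dots> \<longleftrightarrow> K * p \<le> G * y \<and> G * y < Suc K * p"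
    using assms(2) by (simp add: less_eq_div_iff_mult_less_eq div_less_iff_less_mult)
  also have "\<dots> \<longleftrightarrow> (K * p + G - 1) div G \<le> y \<and> y < (Suc K * p + G - 1) div G"
    unfolding ceiling_div_le_iff[OF assms(1)] not_le[symmetric] ..
  finally show ?thesis .
qed

lemma ceiling_div_step:
  fixes p q r G K :: nat
  assumes "p = q * G + r" and "r < G"
  shows "(K * p + G - 1) div G + q \<le> (Suc K * p + G - 1) div G"
    and "(Suc K * p + G - 1) div G \<le> (K * p + G - 1) div G + q + 1"
proof -
  define X where "X = K * p + G - 1"
  have "Suc K * p + G - 1 = (X + r) + q * G"
    using assms unfolding X_def by (simp add: algebra_simps)
  then have eq: "(Suc K * p + G - 1) div G = (X + r) div G + q"
    using assms(2) by simp
  have "X div G \<le> (X + r) div G" "(X + r) div G \<le> (X + G) div G"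
    using assms(2) by (intro div_le_mono; simp)+
  then show "X div G + q \<le> (Suc K * p + G - 1) div G"
    and "(Suc K * p + G - 1) div G \<le> X div G + q + 1"
    using assms(2) unfolding eq by simp_all
qed

lemma div_fibre_eq_interval:
  fixes p G K :: nat
  assumes "0 < p" and "K < G"
  shows "{y \<in> {1..<p}. G * y div p = K} = {max 1 ((K * p + G - 1) div G)..<(Suc K * p + G - 1) div G}"
proof -
  have "0 < G" using assms(2) by simp
  have "(Suc K * p + G - 1) div G \<le> (G * p + G - 1) div G"
    using assms(2) by (intro div_le_mono diff_le_mono add_le_mono1 mult_le_mono1) simp
  also have "G * p + G - 1 = (G - 1) + p * G"
    using \<open>0 < G\<close> mult.commute[of G p] by linarith
  also have "(G - 1 + p * G) div G = p"
    using div_mult_self1[of G "G - 1" p] \<open>0 < G\<close> by simp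
  finally show ?thesis
    unfolding div_eq_iff_ceiling_bounds[OF \<open>0 < G\<close> assms(1)] by auto
qed

lemma pred_div_eq_div:
  fixes q v :: nat
  assumes "\<not> v dvd q"
  shows "(q - 1) div v = q div v"
proof -
  obtain m where "q = Suc m" and "Suc (m mod v) \<noteq> v"
    using assms by (metis dvd_0_right dvd_eq_mod_eq_0 mod_Suc not0_implies_Suc)
  then show ?thesis by (simp add: div_Suc mod_Suc)
qed

(* The fibre over 0 misses y = 0, which costs it a point when r = 0. *)
lemma div_fibre_interval:
  fixes p q r G K :: nat
  assumes "p = q * G + r" and "r < G" and "K < G" and "0 < p"
  obtains s L where "{y \<in> {1..<p}. G * y div p = K} = {s..<s + L}"
    and "L \<le> q + 1" and "q \<le> L \<or> (r = 0 \<and> L + 1 = q)"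
proof -
  have "0 < G" using assms(2) by simp
  define a where "a k = (k * p + G - 1) div G" for k
  have step: "a k + q \<le> a (Suc k)" "a (Suc k) \<le> a k + q + 1" for k
    unfolding a_def using ceiling_div_step[OF assms(1,2)] by auto
  have a_pos: "1 \<le> a k" if "0 < k" for k
    unfolding a_def using ceiling_div_le_iff[OF \<open>0 < G\<close>, of "k * p" 0] that assms(4) by simp
  define s where "s = max 1 (a K)"
  define L where "L = a (Suc K) - s"
  have "s \<le> a (Suc K)"
    unfolding s_def using a_pos[of "Suc K"] step(1)[of K] by simp
  then have "{y \<in> {1..<p}. G * y div p = K} = {s..<s + L}"
    using div_fibre_eq_interval[OF assms(4,3)] unfolding s_def L_def a_def by simp
  moreover have "L \<le> q + 1"
    unfolding L_def s_def using step(2)[of K] by simp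
  moreover have "q \<le> L \<or> (r = 0 \<and> L + 1 = q)"
  proof (cases "K = 0")
    case True
    have "a 0 = 0"
      unfolding a_def using \<open>0 < G\<close> by simp
    then have "L + 1 = a 1" "q \<le> a 1"
      using True a_pos[of 1] step(1)[of 0] unfolding L_def s_def by simp_all
    moreover have "a 1 \<le> q \<longleftrightarrow> r = 0"
      unfolding a_def using ceiling_div_le_iff[OF \<open>0 < G\<close>, of "1 * p" q] assms(1) by simp
    ultimately show ?thesis
      by linarith
  next
    case False
    then have "q \<le> L"
      using a_pos[of K] step(1)[of K] unfolding L_def s_def by simp
    then show ?thesis ..
  qed
  ultimately show thesis
    using that by blast
qed

lemma card_residues_in_fibre:
  fixes p q r G K v c :: nat
  assumes "p = q * G + r" and "r < G" and "K < G" and "c < v" and "\<not> v dvd p"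
  shows "q div v \<le> card {y \<in> {1..<p}. y mod v = c \<and> G * y div p = K}"
    and "card {y \<in> {1..<p}. y mod v = c \<and> G * y div p = K} \<le> q div v + 1"
proof -
  have "0 < p" using assms(5) by (cases p) auto
  obtain s L where fibre: "{y \<in> {1..<p}. G * y div p = K} = {s..<s + L}"
    and L: "L \<le> q + 1" "q \<le> L \<or> (r = 0 \<and> L + 1 = q)"
    using div_fibre_interval[OF assms(1-3) \<open>0 < p\<close>] by blast
  have fibre_residues: "{y \<in> {1..<p}. y mod v = c \<and> G * y div p = K} = {y \<in> {s..<s + L}. y mod v = c}"
    using fibre by blast
  have "(L + v - 1) div v \<le> (q + v) div v"
    using L(1) by (intro div_le_mono) simp
  then show "card {y \<in> {1..<p}. y mod v = c \<and> G * y div p = K} \<le> q div v + 1"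
    unfolding fibre_residues using card_residues_interval(2)[OF assms(4), where a = s and L = L] assms(4)
    by simp
  have "q div v \<le> L div v"
  proof (cases "q \<le> L")
    case False
    with L(2) have "L = q - 1" and "\<not> v dvd q"
      using assms(1,5) by (auto intro: dvd_mult2)
    then show ?thesis
      using pred_div_eq_div by simp
  qed (rule div_le_mono)
  then show "q div v \<le> card {y \<in> {1..<p}. y mod v = c \<and> G * y div p = K}"
    unfolding fibre_residues using card_residues_interval(1)[OF assms(4), where a = s and L = L]
    by linarith
qed

lemma card_residues_with_quotient_in:
  fixes p q r G v c :: nat and B :: "nat set"
  assumes "p = q * G + r" and "r < G" and "c < v" and "\<not> v dvd p" and "B \<subseteq> {..<G}"
  shows "card B * (q div v) \<le> card {y \<in> {1..<p}. y mod v = c \<and> G * y div p \<in> B}"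
    and "card {y \<in> {1..<p}. y mod v = c \<and> G * y div p \<in> B} \<le> card B * (q div v + 1)"
proof -
  define F where "F K = {y \<in> {1..<p}. y mod v = c \<and> G * y div p = K}" for K
  have "finite B" using assms(5) finite_subset by blast
  have "{y \<in> {1..<p}. y mod v = c \<and> G * y div p \<in> B} = (\<Union>K\<in>B. F K)"
    unfolding F_def by auto
  also have "card \<dots> = (\<Sum>K\<in>B. card (F K))"
    using \<open>finite B\<close> by (intro card_UN_disjoint) (auto simp: F_def)
  finally have sum: "card {y \<in> {1..<p}. y mod v = c \<and> G * y div p \<in> B} = (\<Sum>K\<in>B. card (F K))" .
  have "K \<in> B \<Longrightarrow> q div v \<le> card (F K)" "K \<in> B \<Longrightarrow> card (F K) \<le> q div v + 1" for K
    unfolding F_def using card_residues_in_fibre[OF assms(1,2) _ assms(3,4)] assms(5) by auto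
  then show "card B * (q div v) \<le> card {y \<in> {1..<p}. y mod v = c \<and> G * y div p \<in> B}"
    and "card {y \<in> {1..<p}. y mod v = c \<and> G * y div p \<in> B} \<le> card B * (q div v + 1)"
    unfolding sum using sum_bounded_below[of B "q div v"] sum_bounded_above[of B _ "q div v + 1"] by auto
qed

section \<open>Carries and digits\<close>

lemma cong_linear_solution_class:
  fixes p v a b :: nat
  assumes "coprime p v" and "0 < v"
  shows "\<exists>c<v. \<forall>d. [p * d + b = a] (mod v) \<longleftrightarrow> d mod v = c"
proof -
  obtain s where s: "[p * s = 1] (mod v)"
    using cong_solve_coprime_nat[OF assms(1)] by auto
  define d0 where "d0 = s * (a + (v - 1) * b)"
  have "[p * s * (a + (v - 1) * b) = 1 * (a + (v - 1) * b)] (mod v)"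
    using s by (rule cong_scalar_right)
  then have "[p * d0 + b = 1 * (a + (v - 1) * b) + b] (mod v)"
    unfolding d0_def mult.assoc[symmetric] by (rule cong_add_rcancel_nat[THEN iffD2])
  also have "1 * (a + (v - 1) * b) + b = a + v * b"
    using assms(2) by (cases v) (simp_all add: algebra_simps)
  also have "[a + v * b = a] (mod v)"
    by (simp add: cong_def)
  finally have d0: "[p * d0 + b = a] (mod v)" .
  have "[p * d + b = a] (mod v) \<longleftrightarrow> d mod v = d0 mod v" for d
  proof -
    have "[p * d + b = a] (mod v) \<longleftrightarrow> [p * d + b = p * d0 + b] (mod v)"
      using d0 by (meson cong_sym cong_trans)
    also have "\<dots> \<longleftrightarrow> [d = d0] (mod v)"
      by (simp add: cong_add_rcancel_nat cong_mult_lcancel_nat[OF assms(1)])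
    finally show ?thesis by (simp add: cong_def)
  qed
  then show ?thesis using assms(2) by (intro exI[of _ "d0 mod v"]) simp
qed

lemma mod_mod_eq_iff_cong_div:
  fixes p v X w z :: nat
  assumes "[X = w] (mod v)" and "z < v"
  shows "(X mod p) mod v = z \<longleftrightarrow> [p * (X div p) + z = w] (mod v)"
proof -
  have "(X mod p) mod v = z \<longleftrightarrow> [X mod p = z] (mod v)"
    using assms(2) by (simp add: cong_def)
  also have "\<dots> \<longleftrightarrow> [p * (X div p) + X mod p = p * (X div p) + z] (mod v)"
    by (rule cong_add_lcancel_nat[symmetric])
  also have "\<dots> \<longleftrightarrow> [w = p * (X div p) + z] (mod v)"
    using assms(1) by (auto intro: cong_trans cong_sym)
  finally show ?thesis by (simp add: cong_sym_eq)
qed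

lemma carry_eq_digit:
  fixes p g y i n :: nat
  assumes "0 < p" and "0 < g" and "i < n"
  shows "g * (g^i * y mod p) div p = (g^n * y div p div g^(n - Suc i)) mod g"
proof -
  have "g^n = g^(n - Suc i) * g^Suc i"
    using assms(3) power_add[of g "n - Suc i" "Suc i"] by simp
  then have "g^n * y div p div g^(n - Suc i) = (g^(n - Suc i) * (g^Suc i * y)) div (g^(n - Suc i) * p)"
    by (simp only: div_mult2_eq[symmetric] mult.assoc mult.commute)
  also have "\<dots> = g * (g^i * y) div p"
    using assms(2) by (simp add: div_mult_mult1 mult.assoc)
  also have "\<dots> = g * (g^i * y div p) + g * (g^i * y mod p) div p"
    by (rule div_mult1_eq)
  finally have "(g^n * y div p div g^(n - Suc i)) mod g = (g * (g^i * y mod p) div p) mod g"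
    by simp
  also have "\<dots> = g * (g^i * y mod p) div p"
    using assms(1,2) by (intro mod_less) (simp add: div_less_iff_less_mult)
  finally show ?thesis ..
qed

lemma all_less_Suc_chain:
  assumes "\<And>i. i < n \<Longrightarrow> P i \<Longrightarrow> P (Suc i) \<longleftrightarrow> Q i"
  shows "(\<forall>i<Suc n. P i) \<longleftrightarrow> P 0 \<and> (\<forall>i<n. Q i)"
  using assms
proof (induction n)
  case 0
  then show ?case by simp
next
  case (Suc n)
  have "(\<forall>i<Suc (Suc n). P i) \<longleftrightarrow> (\<forall>i<Suc n. P i) \<and> P (Suc n)"
    by (auto simp: less_Suc_eq)
  also have "\<dots> \<longleftrightarrow> P 0 \<and> (\<forall>i<n. Q i) \<and> Q n"
    using Suc.IH Suc.prems[of n] Suc.prems by auto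
  finally show ?case by (auto simp: less_Suc_eq)
qed

lemma all_less_rev:
  fixes n :: nat
  shows "(\<forall>i<n. P (n - Suc i) i) \<longleftrightarrow> (\<forall>j<n. P j (n - Suc j))"
proof -
  have rev: "n - Suc i < n \<and> n - Suc (n - Suc i) = i" if "i < n" for i
    using that by simp
  show ?thesis by (metis rev)
qed

lemma power_residue_pattern_iff_digits:
  fixes p g v n :: nat and z :: "nat \<Rightarrow> nat"
  assumes "0 < p" and "0 < g" and "0 < v" and "coprime p v" and "\<forall>i<Suc n. z i < v"
  obtains e where "\<forall>j<n. e j < v"
    and "\<And>y. y < p \<Longrightarrow> (\<forall>i<Suc n. (g^i * y mod p) mod v = z i)
           \<longleftrightarrow> y mod v = z 0 \<and> (\<forall>j<n. (g^n * y div p div g^j) mod g mod v = e j)"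
proof -
  have "\<forall>i. \<exists>c. c < v \<and> (\<forall>d. [p * d + z (Suc i) = g * z i] (mod v) \<longleftrightarrow> d mod v = c)"
    using cong_linear_solution_class[OF assms(4,3)] by blast
  then obtain c where c_less: "\<And>i. c i < v"
    and c: "\<And>i d. [p * d + z (Suc i) = g * z i] (mod v) \<longleftrightarrow> d mod v = c i"
    by (metis choice)
  show thesis
  proof (rule that[of "\<lambda>j. c (n - Suc j)"])
    show "\<forall>j<n. c (n - Suc j) < v" using c_less by simp
    fix y assume "y < p"
    define P where "P i \<longleftrightarrow> (g^i * y mod p) mod v = z i" for i
    have "P (Suc i) \<longleftrightarrow> (g * (g^i * y mod p) div p) mod v = c i" if "i < n" and "P i" for i
    proof -
      have "[g * (g^i * y mod p) = g * z i] (mod v)"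
        using \<open>P i\<close> assms(5) \<open>i < n\<close> unfolding P_def by (intro cong_scalar_left) (simp add: cong_def)
      moreover have "z (Suc i) < v" using assms(5) \<open>i < n\<close> by simp
      moreover have "g^Suc i * y mod p = g * (g^i * y mod p) mod p"
        by (simp add: mod_mult_right_eq mult.assoc)
      ultimately have "P (Suc i) \<longleftrightarrow> [p * (g * (g^i * y mod p) div p) + z (Suc i) = g * z i] (mod v)"
        unfolding P_def by (simp only: mod_mod_eq_iff_cong_div)
      also have "\<dots> \<longleftrightarrow> (g * (g^i * y mod p) div p) mod v = c i" by (rule c)
      finally show ?thesis .
    qed
    then have "(\<forall>i<Suc n. P i) \<longleftrightarrow> P 0 \<and> (\<forall>i<n. (g * (g^i * y mod p) div p) mod v = c i)"
      by (rule all_less_Suc_chain)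
    also have "\<dots> \<longleftrightarrow> y mod v = z 0 \<and> (\<forall>i<n. (g^n * y div p div g^(n - Suc i)) mod g mod v = c i)"
      using carry_eq_digit[OF assms(1,2)] \<open>y < p\<close> unfolding P_def by simp
    also have "\<dots> \<longleftrightarrow> y mod v = z 0 \<and> (\<forall>j<n. (g^n * y div p div g^j) mod g mod v = c (n - Suc j))"
      using all_less_rev[where P = "\<lambda>j i. (g^n * y div p div g^j) mod g mod v = c i"] by simp
    finally show "(\<forall>i<Suc n. (g^i * y mod p) mod v = z i)
           \<longleftrightarrow> y mod v = z 0 \<and> (\<forall>j<n. (g^n * y div p div g^j) mod g mod v = c (n - Suc j))"
      unfolding P_def .
  qed
qed

lemma pattern_count_eq_card_residues:
  assumes "prime p" and "ord p g = p - 1"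
  shows "pattern_count p g v t z = card {y \<in> {1..<p}. \<forall>i<t. (g^i * y mod p) mod v = z i}"
proof -
  have "residue_primroot p g"
    using assms prime_gt_1_nat[OF assms(1)] ord_eq_0[of p g]
    by (auto simp: residue_primroot_def totient_prime)
  then have "bij_betw (\<lambda>x. g^x mod p) {..<p - 1} {0<..<p}"
    using residue_primroot_is_generator[OF prime_gt_1_nat[OF assms(1)]] assms(1)
    by (simp add: totient_prime totatives_prime)
  then have "bij_betw (\<lambda>x. g^x mod p) {x \<in> {..<p - 1}. \<forall>i<t. (g^(x + i) mod p) mod v = z i}
      {y \<in> {0<..<p}. \<forall>i<t. (g^i * y mod p) mod v = z i}"
    by (rule bij_betw_Collect) (simp add: power_add mod_mult_right_eq mult.commute)
  moreover have "{0..p - 2} = {..<p - 1}" "{0<..<p} = {1..<p}"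
    using prime_gt_1_nat[OF assms(1)] by auto
  ultimately show ?thesis
    unfolding pattern_count_def by (simp add: bij_betw_same_card)
qed

lemma pattern_count_bounds:
  fixes p g v n q r :: nat and z :: "nat \<Rightarrow> nat"
  assumes "prime p" and "ord p g = p - 1" and "0 < g" and "1 < v" and "v < p"
    and "p = q * g^n + r" and "r < g^n" and "\<forall>i<Suc n. z i < v"
  shows "(g div v)^n * (q div v) \<le> pattern_count p g v (Suc n) z"
    and "pattern_count p g v (Suc n) z \<le> ((g + v - 1) div v)^n * (q div v + 1)"
proof -
  have "0 < p" using prime_gt_0_nat[OF assms(1)] .
  have "\<not> v dvd p"
    using assms(1,4,5) prime_nat_iff by auto
  have "coprime p v"
    using assms(1,4,5) by (intro prime_imp_coprime) auto
  obtain e where e_less: "\<forall>j<n. e j < v"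
    and e: "\<And>y. y < p \<Longrightarrow> (\<forall>i<Suc n. (g^i * y mod p) mod v = z i)
             \<longleftrightarrow> y mod v = z 0 \<and> (\<forall>j<n. (g^n * y div p div g^j) mod g mod v = e j)"
    using power_residue_pattern_iff_digits[OF \<open>0 < p\<close> assms(3) _ \<open>coprime p v\<close> assms(8)] assms(4)
    by auto
  define B where "B = {K \<in> {..<g^n}. \<forall>j<n. (K div g^j) mod g mod v = e j}"
  have "g^n * y div p < g^n" if "y < p" for y
    using that assms(3) by (simp add: div_less_iff_less_mult)
  then have "pattern_count p g v (Suc n) z = card {y \<in> {1..<p}. y mod v = z 0 \<and> g^n * y div p \<in> B}"
    unfolding pattern_count_eq_card_residues[OF assms(1,2)] B_def using e
    by (intro arg_cong[where f = card]) auto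
  moreover have "(g div v)^n \<le> card B" "card B \<le> ((g + v - 1) div v)^n"
    unfolding B_def using card_digits_residues[OF assms(3) e_less] by auto
  moreover have "card B * (q div v) \<le> card {y \<in> {1..<p}. y mod v = z 0 \<and> g^n * y div p \<in> B}"
    and "card {y \<in> {1..<p}. y mod v = z 0 \<and> g^n * y div p \<in> B} \<le> card B * (q div v + 1)"
    using card_residues_with_quotient_in[OF assms(6,7) _ \<open>\<not> v dvd p\<close>, of "z 0" B] assms(8)
    unfolding B_def by auto
  ultimately show "(g div v)^n * (q div v) \<le> pattern_count p g v (Suc n) z"
    and "pattern_count p g v (Suc n) z \<le> ((g + v - 1) div v)^n * (q div v + 1)"
    using mult_le_mono1 order_trans by metis+
qed

lemma ceiling_divide_of_nat:
  fixes g v :: nat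
  assumes "0 < v"
  shows "\<lceil>real g / real v\<rceil> = int ((g + v - 1) div v)"
proof (rule ceiling_unique)
  have "g \<le> v * ((g + v - 1) div v)"
    using ceiling_div_le_iff[OF assms, of g "(g + v - 1) div v"] by simp
  then show "real g / real v \<le> real_of_int (int ((g + v - 1) div v))"
    using assms by (simp add: divide_le_eq mult.commute flip: of_nat_mult)
  have "v * ((g + v - 1) div v) < g + v"
    using div_times_less_eq_dividend[of "g + v - 1" v] mult.commute[of v "(g + v - 1) div v"] assms
    by linarith
  then show "real_of_int (int ((g + v - 1) div v)) - 1 < real g / real v"
    using assms by (simp add: less_divide_eq field_simps flip: of_nat_mult)
qed

theorem theorem8:
  fixes p v g t q r :: nat and z :: "nat \<Rightarrow> nat"
  assumes "prime p" and "odd p"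
    and "1 < v" and "v < p - 1"
    and "g \<in> {2..p-1}" and "ord p g = p - 1"
    and "t \<ge> 1"
    and "p = q * g ^ (t - 1) + r" and "r < g ^ (t - 1)"
    and "\<forall>i<t. z i < v"
  shows "(real (g div v)) ^ (t - 1) * real (q div v) \<le> real (pattern_count p g v t z)
       \<and> real (pattern_count p g v t z)
           \<le> (real_of_int \<lceil>real g / real v\<rceil>) ^ (t - 1) * (real (q div v) + 1)"
proof -
  have t: "t = Suc (t - 1)" using assms(7) by simp
  have "0 < g" using assms(5) by simp
  have "v < p" using assms(4) by simp
  note bounds = pattern_count_bounds[OF assms(1,6) \<open>0 < g\<close> assms(3) \<open>v < p\<close> assms(8,9)]
  have "real ((g div v)^(t - 1) * (q div v)) \<le> real (pattern_count p g v t z)"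
    and "real (pattern_count p g v t z) \<le> real (((g + v - 1) div v)^(t - 1) * (q div v + 1))"
    using bounds assms(10) t by (metis of_nat_le_iff)+
  moreover have "real_of_int \<lceil>real g / real v\<rceil> = real ((g + v - 1) div v)"
    using ceiling_divide_of_nat assms(3) by simp
  ultimately show ?thesis
    unfolding of_nat_mult of_nat_power of_nat_add of_nat_1 by simp
qed

end
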